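(* Let $\mathbf X$ be a random variable with values in $\mathcal X$, let $\mathcal A$ be a finite set, and let $Q_0,Q_1:\mathcal X\times\mathcal A\to(0,\infty)$ be Q-functions with $\mathbb E\big[\sum_{a\in\mathcal A}Q_0(\mathbf X,a)\big]<\infty$. For $\gamma\notin\{0,-1\}$ define $$H_\gamma(Q_0,Q_1)=-\frac1\gamma\,\mathbb E\Bigg[\frac{\sum_{a\in\mathcal A}Q_0(\mathbf X,a)\,Q_1(\mathbf X,a)^{\gamma}}{\big\{\sum_{a\in\mathcal A}Q_1(\mathbf X,a)^{1+\gamma}\big\}^{\frac{\gamma}{1+\gamma}}}\Bigg],\qquad D_\gamma(Q_0,Q_1)=H_\gamma(Q_0,Q_1)-H_\gamma(Q_0,Q_0).$$ For $j=0,1$ let $\mathcal D_j(\mathbf x)=\operatorname{argmax}_{a\in\mathcal A}Q_j(\mathbf x,a)$ (the maximizer being assumed unique for each $\mathbf x$), and define the value function generated by $Q_0$ as $\mathbb V_0(\mathcal D)=\mathbb E[Q_0(\mathbf X,\mathcal D(\mathbf X))]$ for policy functions $\mathcal D:\mathcal X\to\mathcal A$. Then $$\lim_{\gamma\to\infty}\gamma\,D_\gamma(Q_0,Q_1)=\mathbb V_0(\mathcal D_0)-\mathbb V_0(\mathcal D_1).$$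
   Context: A Q-function is a measurable function $\mathcal X\times\mathcal A\to(0,\infty)$; a policy function is a measurable map $\mathcal X\to\mathcal A$. $\mathbb E$ denotes expectation with respect to $\mathbf X$. *)

theory Defs
  imports "HOL-Probability.Probability"
begin

definition H_gamma :: "'w measure \<Rightarrow> ('w \<Rightarrow> 'x) \<Rightarrow> 'a set \<Rightarrow> real
    \<Rightarrow> ('x \<Rightarrow> 'a \<Rightarrow> real) \<Rightarrow> ('x \<Rightarrow> 'a \<Rightarrow> real) \<Rightarrow> real" where
  "H_gamma M X A \<gamma> Q0 Q1 =
     - (1 / \<gamma>) * (\<integral>\<omega>. (\<Sum>a\<in>A. Q0 (X \<omega>) a * Q1 (X \<omega>) a powr \<gamma>)
         / (\<Sum>a\<in>A. Q1 (X \<omega>) a powr (1 + \<gamma>)) powr (\<gamma> / (1 + \<gamma>)) \<partial>M)"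

definition D_gamma :: "'w measure \<Rightarrow> ('w \<Rightarrow> 'x) \<Rightarrow> 'a set \<Rightarrow> real
    \<Rightarrow> ('x \<Rightarrow> 'a \<Rightarrow> real) \<Rightarrow> ('x \<Rightarrow> 'a \<Rightarrow> real) \<Rightarrow> real" where
  "D_gamma M X A \<gamma> Q0 Q1 = H_gamma M X A \<gamma> Q0 Q1 - H_gamma M X A \<gamma> Q0 Q0"

definition argmax_set :: "'a set \<Rightarrow> ('x \<Rightarrow> 'a \<Rightarrow> real) \<Rightarrow> 'x \<Rightarrow> 'a set" where
  "argmax_set A Q x = {a \<in> A. \<forall>b\<in>A. Q x b \<le> Q x a}"

text \<open>The policy induced by Q (meaningful when the maximizer is unique).\<close>
definition argmax_policy :: "'a set \<Rightarrow> ('x \<Rightarrow> 'a \<Rightarrow> real) \<Rightarrow> 'x \<Rightarrow> 'a" where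
  "argmax_policy A Q x = (THE a. a \<in> argmax_set A Q x)"

definition value_fun :: "'w measure \<Rightarrow> ('w \<Rightarrow> 'x) \<Rightarrow> ('x \<Rightarrow> 'a \<Rightarrow> real) \<Rightarrow> ('x \<Rightarrow> 'a) \<Rightarrow> real" where
  "value_fun M X Q0 D = (\<integral>\<omega>. Q0 (X \<omega>) (D (X \<omega>)) \<partial>M)"

end

theory Submission imports Defs "HOL-Real_Asymp.Real_Asymp" begin

text \<open>For fixed \<open>x\<close>, the integrand of \<open>-\<gamma> H\<^sub>\<gamma>(Q\<^sub>0, Q\<^sub>1)\<close> is the score
\<open>\<Sum>\<^sub>a Q\<^sub>0(x,a) Q\<^sub>1(x,a)\<^sup>\<gamma> / N\<^sup>\<gamma>\<close>, where \<open>N\<close> is the \<open>(1+\<gamma>)\<close>-norm of \<open>Q\<^sub>1(x,-)\<close>.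
The score is invariant under rescaling \<open>Q\<^sub>1(x,-)\<close>, so we may divide by its maximum: then every
non-maximal ratio raised to the power \<open>\<gamma>\<close> vanishes while the norm tends to 1, and the score tends to
\<open>Q\<^sub>0(x, a\<^sub>1(x))\<close> with \<open>a\<^sub>1(x)\<close> the maximizer. Since \<open>Q\<^sub>1(x,a)\<^sup>\<gamma> \<le> N\<^sup>\<gamma>\<close>, the score is
dominated by \<open>\<Sum>\<^sub>a Q\<^sub>0(x,a)\<close>, so dominated convergence gives the limit of the expectation;
applying this to \<open>Q\<^sub>1\<close> and to \<open>Q\<^sub>0\<close> yields the difference of values.\<close>

definition gamma_score :: "'a set \<Rightarrow> ('a \<Rightarrow> real) \<Rightarrow> ('a \<Rightarrow> real) \<Rightarrow> real \<Rightarrow> real" where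
  "gamma_score A c Q \<gamma> =
     (\<Sum>a\<in>A. c a * Q a powr \<gamma>) / (\<Sum>a\<in>A. Q a powr (1 + \<gamma>)) powr (\<gamma> / (1 + \<gamma>))"

lemma tendsto_powr_at_top_zero:
  fixes r :: real
  assumes "0 < r" "r < 1" "filterlim g at_top F"
  shows "((\<lambda>t. r powr g t) \<longlongrightarrow> 0) F"
proof -
  have "((\<lambda>t. r powr t) \<longlongrightarrow> 0) at_top" using assms(1,2) by real_asymp
  then show ?thesis using assms(3) by (rule filterlim_compose)
qed

lemma tendsto_sum_powr_dominant:
  fixes r c :: "'a \<Rightarrow> real"
  assumes "finite A" "m \<in> A" "r m = 1" "\<forall>a\<in>A - {m}. 0 < r a \<and> r a < 1"
    and "filterlim g at_top F"
  shows "((\<lambda>t. \<Sum>a\<in>A. c a * r a powr g t) \<longlongrightarrow> c m) F"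
proof -
  have "((\<lambda>t. c a * r a powr g t) \<longlongrightarrow> (if a = m then c m else 0)) F" if "a \<in> A" for a
  proof (cases "a = m")
    case False
    with that assms(4,5) show ?thesis
      by (auto intro!: tendsto_mult_right_zero tendsto_powr_at_top_zero)
  qed (simp add: assms(3))
  then have "((\<lambda>t. \<Sum>a\<in>A. c a * r a powr g t) \<longlongrightarrow> (\<Sum>a\<in>A. if a = m then c m else 0)) F"
    by (rule tendsto_sum)
  then show ?thesis using assms(1,2) by simp
qed

lemma gamma_score_normalized_tendsto:
  fixes r c :: "'a \<Rightarrow> real"
  assumes "finite A" "m \<in> A" "r m = 1" "\<forall>a\<in>A - {m}. 0 < r a \<and> r a < 1"
  shows "(gamma_score A c r \<longlongrightarrow> c m) at_top"
proof -
  have num: "((\<lambda>\<gamma>. \<Sum>a\<in>A. c a * r a powr \<gamma>) \<longlongrightarrow> c m) at_top"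
    using assms filterlim_ident by (rule tendsto_sum_powr_dominant)
  have "filterlim (\<lambda>\<gamma>::real. 1 + \<gamma>) at_top at_top" by real_asymp
  with assms have "((\<lambda>\<gamma>. \<Sum>a\<in>A. 1 * r a powr (1 + \<gamma>)) \<longlongrightarrow> 1) at_top"
    by (rule tendsto_sum_powr_dominant)
  moreover have "((\<lambda>\<gamma>::real. \<gamma> / (1 + \<gamma>)) \<longlongrightarrow> 1) at_top" by real_asymp
  ultimately have den: "((\<lambda>\<gamma>. (\<Sum>a\<in>A. r a powr (1 + \<gamma>)) powr (\<gamma> / (1 + \<gamma>))) \<longlongrightarrow> 1 powr 1) at_top"
    by (intro tendsto_powr) auto
  from tendsto_divide[OF num den] show ?thesis
    by (simp add: gamma_score_def[abs_def])
qed

lemma gamma_score_scale: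
  fixes Q c :: "'a \<Rightarrow> real"
  assumes "t > 0" "1 + \<gamma> \<noteq> 0"
  shows "gamma_score A c (\<lambda>a. Q a / t) \<gamma> = gamma_score A c Q \<gamma>"
proof -
  have "(\<Sum>a\<in>A. (Q a / t) powr (1 + \<gamma>)) powr (\<gamma> / (1 + \<gamma>))
      = (\<Sum>a\<in>A. Q a powr (1 + \<gamma>)) powr (\<gamma> / (1 + \<gamma>)) / t powr \<gamma>"
    using assms by (simp add: powr_divide sum_divide_distrib[symmetric] powr_powr)
  moreover have "(\<Sum>a\<in>A. c a * (Q a / t) powr \<gamma>) = (\<Sum>a\<in>A. c a * Q a powr \<gamma>) / t powr \<gamma>"
    by (simp add: powr_divide sum_divide_distrib)
  ultimately show ?thesis
    using assms(1) by (simp add: gamma_score_def)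
qed

lemma gamma_score_tendsto_argmax:
  fixes Q c :: "'a \<Rightarrow> real"
  assumes "finite A" "\<forall>a\<in>A. Q a > 0" "m \<in> A" "\<forall>b\<in>A - {m}. Q b < Q m"
  shows "(gamma_score A c Q \<longlongrightarrow> c m) at_top"
proof -
  have Qm: "Q m > 0" using assms(2,3) by blast
  have "(gamma_score A c (\<lambda>a. Q a / Q m) \<longlongrightarrow> c m) at_top"
    using assms Qm by (intro gamma_score_normalized_tendsto) auto
  moreover have "\<forall>\<^sub>F \<gamma> in at_top. gamma_score A c (\<lambda>a. Q a / Q m) \<gamma> = gamma_score A c Q \<gamma>"
    using eventually_gt_at_top[of 0] by eventually_elim (simp add: gamma_score_scale Qm)
  ultimately show ?thesis by (rule Lim_transform_eventually)
qed

lemma powr_le_sum_powr_powr: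
  fixes Q :: "'a \<Rightarrow> real"
  assumes "finite A" "\<forall>a\<in>A. Q a > 0" "a \<in> A" "\<gamma> \<ge> 0"
  shows "Q a powr \<gamma> \<le> (\<Sum>b\<in>A. Q b powr (1 + \<gamma>)) powr (\<gamma> / (1 + \<gamma>))"
proof -
  have "Q a powr \<gamma> = (Q a powr (1 + \<gamma>)) powr (\<gamma> / (1 + \<gamma>))"
    using assms(4) by (simp add: powr_powr)
  also have "\<dots> \<le> (\<Sum>b\<in>A. Q b powr (1 + \<gamma>)) powr (\<gamma> / (1 + \<gamma>))"
    using assms by (intro powr_mono2 member_le_sum) auto
  finally show ?thesis .
qed

lemma abs_gamma_score_le:
  fixes Q c :: "'a \<Rightarrow> real"
  assumes "finite A" "\<forall>a\<in>A. Q a > 0" "\<forall>a\<in>A. c a \<ge> 0" "\<gamma> \<ge> 0"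
  shows "\<bar>gamma_score A c Q \<gamma>\<bar> \<le> (\<Sum>a\<in>A. c a)"
proof (cases "A = {}")
  case False
  define N where "N = (\<Sum>b\<in>A. Q b powr (1 + \<gamma>)) powr (\<gamma> / (1 + \<gamma>))"
  have le_N: "Q a powr \<gamma> \<le> N" if "a \<in> A" for a
    unfolding N_def using assms(1,2) that assms(4) by (rule powr_le_sum_powr_powr)
  from False obtain a0 where a0: "a0 \<in> A" by blast
  have "0 < Q a0 powr \<gamma>" using assms(2) a0 by fastforce
  also have "\<dots> \<le> N" using a0 by (rule le_N)
  finally have "N > 0" .
  have "gamma_score A c Q \<gamma> = (\<Sum>a\<in>A. c a * (Q a powr \<gamma> / N))"
    by (simp add: gamma_score_def N_def sum_divide_distrib)
  moreover have "(\<Sum>a\<in>A. c a * (Q a powr \<gamma> / N)) \<le> (\<Sum>a\<in>A. c a)"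
    using assms(3) le_N \<open>N > 0\<close> by (intro sum_mono mult_right_le_one_le) auto
  moreover have "(\<Sum>a\<in>A. c a * (Q a powr \<gamma> / N)) \<ge> 0"
    using assms(3) \<open>N > 0\<close> by (intro sum_nonneg) auto
  ultimately show ?thesis by simp
qed (simp add: gamma_score_def)

lemma argmax_policy_in:
  assumes "\<exists>!a. a \<in> argmax_set A Q x"
  shows "argmax_policy A Q x \<in> argmax_set A Q x"
  unfolding argmax_policy_def using assms by (rule theI')

lemma argmax_policy_strict_max:
  assumes "\<exists>!a. a \<in> argmax_set A Q x"
  shows "argmax_policy A Q x \<in> A" "\<forall>b\<in>A - {argmax_policy A Q x}. Q x b < Q x (argmax_policy A Q x)"
proof -
  let ?m = "argmax_policy A Q x"
  have m: "?m \<in> argmax_set A Q x" using assms by (rule argmax_policy_in)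
  then show "?m \<in> A" by (simp add: argmax_set_def)
  show "\<forall>b\<in>A - {?m}. Q x b < Q x ?m"
  proof
    fix b assume b: "b \<in> A - {?m}"
    have "Q x b \<noteq> Q x ?m"
    proof
      assume "Q x b = Q x ?m"
      with m b have "b \<in> argmax_set A Q x" by (simp add: argmax_set_def)
      with m b assms show False by blast
    qed
    moreover have "Q x b \<le> Q x ?m" using m b by (simp add: argmax_set_def)
    ultimately show "Q x b < Q x ?m" by simp
  qed
qed

lemma measurable_compose_section:
  assumes "X \<in> measurable M S" "(\<lambda>(x, a). Q x a) \<in> borel_measurable (S \<Otimes>\<^sub>M count_space A)" "a \<in> A"
  shows "(\<lambda>\<omega>. Q (X \<omega>) a) \<in> borel_measurable M"
proof -
  have "(\<lambda>\<omega>. (X \<omega>, a)) \<in> measurable M (S \<Otimes>\<^sub>M count_space A)"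
    using assms(1,3) by (intro measurable_Pair) auto
  from measurable_compose[OF this assms(2)] show ?thesis by simp
qed

lemma integral_gamma_score_tendsto_value_fun:
  fixes M :: "'w measure" and S :: "'x measure" and X :: "'w \<Rightarrow> 'x"
    and A :: "'a set" and Q0 Q1 :: "'x \<Rightarrow> 'a \<Rightarrow> real"
  assumes X: "X \<in> measurable M S"
    and fin: "finite A"
    and meas0: "(\<lambda>(x, a). Q0 x a) \<in> borel_measurable (S \<Otimes>\<^sub>M count_space A)"
    and meas1: "(\<lambda>(x, a). Q1 x a) \<in> borel_measurable (S \<Otimes>\<^sub>M count_space A)"
    and nonneg0: "\<forall>x\<in>space S. \<forall>a\<in>A. Q0 x a \<ge> 0"
    and pos1: "\<forall>x\<in>space S. \<forall>a\<in>A. Q1 x a > 0"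
    and int: "integrable M (\<lambda>\<omega>. \<Sum>a\<in>A. Q0 (X \<omega>) a)"
    and unique1: "\<forall>x\<in>space S. \<exists>!a. a \<in> argmax_set A Q1 x"
  shows "((\<lambda>\<gamma>. \<integral>\<omega>. gamma_score A (Q0 (X \<omega>)) (Q1 (X \<omega>)) \<gamma> \<partial>M)
           \<longlongrightarrow> value_fun M X Q0 (argmax_policy A Q1)) at_top"
proof -
  define s where "s \<gamma> \<omega> = gamma_score A (Q0 (X \<omega>)) (Q1 (X \<omega>)) \<gamma>" for \<gamma> \<omega>
  define f where "f \<omega> = Q0 (X \<omega>) (argmax_policy A Q1 (X \<omega>))" for \<omega>
  have XS: "X \<omega> \<in> space S" if "\<omega> \<in> space M" for \<omega>
    using X that by (rule measurable_space)
  have lim: "((\<lambda>\<gamma>. s \<gamma> \<omega>) \<longlongrightarrow> f \<omega>) at_top" if "\<omega> \<in> space M" for \<omega>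
    unfolding s_def f_def using fin pos1 XS[OF that]
    by (intro gamma_score_tendsto_argmax argmax_policy_strict_max unique1[rule_format]) auto
  have [measurable]: "(\<lambda>\<omega>. Q0 (X \<omega>) a) \<in> borel_measurable M"
    "(\<lambda>\<omega>. Q1 (X \<omega>) a) \<in> borel_measurable M" if "a \<in> A" for a
    using X meas0 meas1 that by (auto intro: measurable_compose_section)
  have meas_s: "s \<gamma> \<in> borel_measurable M" for \<gamma>
    unfolding s_def gamma_score_def by measurable
  \<comment> \<open>The policy value is measurable as a pointwise limit; no measurability of the argmax is assumed.\<close>
  have meas_f: "f \<in> borel_measurable M"
  proof (rule borel_measurable_LIMSEQ_real[OF _ meas_s])
    fix \<omega> assume "\<omega> \<in> space M"
    from filterlim_compose[OF lim[OF this] filterlim_real_sequentially]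
    show "(\<lambda>n. s (real n) \<omega>) \<longlonglongrightarrow> f \<omega>" .
  qed
  have "\<forall>\<^sub>F \<gamma> in at_top. AE \<omega> in M. norm (s \<gamma> \<omega>) \<le> (\<Sum>a\<in>A. Q0 (X \<omega>) a)"
    using eventually_ge_at_top[of 0]
  proof eventually_elim
    case (elim \<gamma>)
    show ?case
      unfolding s_def real_norm_def using fin pos1 nonneg0 XS elim
      by (intro AE_I2 abs_gamma_score_le) auto
  qed
  with lim have "((\<lambda>\<gamma>. integral\<^sup>L M (s \<gamma>)) \<longlongrightarrow> integral\<^sup>L M f) at_top"
    by (intro integral_dominated_convergence_at_top[OF meas_f meas_s int]) auto
  then show ?thesis unfolding s_def f_def value_fun_def .
qed

lemma gamma_mult_H_gamma:
  assumes "\<gamma> \<noteq> 0"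
  shows "\<gamma> * H_gamma M X A \<gamma> Q0 Q1 = - (\<integral>\<omega>. gamma_score A (Q0 (X \<omega>)) (Q1 (X \<omega>)) \<gamma> \<partial>M)"
  using assms by (simp add: H_gamma_def gamma_score_def)

theorem theorem2:
  fixes M :: "'w measure" and S :: "'x measure" and X :: "'w \<Rightarrow> 'x"
    and A :: "'a set" and Q0 Q1 :: "'x \<Rightarrow> 'a \<Rightarrow> real"
  assumes "prob_space M"
    and "X \<in> measurable M S"
    and "finite A"
    and "(\<lambda>(x, a). Q0 x a) \<in> borel_measurable (S \<Otimes>\<^sub>M count_space A)"
    and "(\<lambda>(x, a). Q1 x a) \<in> borel_measurable (S \<Otimes>\<^sub>M count_space A)"
    and "\<forall>x\<in>space S. \<forall>a\<in>A. Q0 x a > 0"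
    and "\<forall>x\<in>space S. \<forall>a\<in>A. Q1 x a > 0"
    and "integrable M (\<lambda>\<omega>. \<Sum>a\<in>A. Q0 (X \<omega>) a)"
    and "\<forall>x\<in>space S. \<exists>!a. a \<in> argmax_set A Q0 x"
    and "\<forall>x\<in>space S. \<exists>!a. a \<in> argmax_set A Q1 x"
  shows "((\<lambda>\<gamma>. \<gamma> * D_gamma M X A \<gamma> Q0 Q1) \<longlongrightarrow>
           value_fun M X Q0 (argmax_policy A Q0) - value_fun M X Q0 (argmax_policy A Q1)) at_top"
proof -
  have nonneg0: "\<forall>x\<in>space S. \<forall>a\<in>A. Q0 x a \<ge> 0"
    using assms(6) by (simp add: less_imp_le)
  have lim0: "((\<lambda>\<gamma>. \<integral>\<omega>. gamma_score A (Q0 (X \<omega>)) (Q0 (X \<omega>)) \<gamma> \<partial>M)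
      \<longlongrightarrow> value_fun M X Q0 (argmax_policy A Q0)) at_top"
    using assms(2-4,4) nonneg0 assms(6,8,9) by (rule integral_gamma_score_tendsto_value_fun)
  have lim1: "((\<lambda>\<gamma>. \<integral>\<omega>. gamma_score A (Q0 (X \<omega>)) (Q1 (X \<omega>)) \<gamma> \<partial>M)
      \<longlongrightarrow> value_fun M X Q0 (argmax_policy A Q1)) at_top"
    using assms(2-5) nonneg0 assms(7,8,10) by (rule integral_gamma_score_tendsto_value_fun)
  have "\<forall>\<^sub>F \<gamma> in at_top. (\<integral>\<omega>. gamma_score A (Q0 (X \<omega>)) (Q0 (X \<omega>)) \<gamma> \<partial>M)
      - (\<integral>\<omega>. gamma_score A (Q0 (X \<omega>)) (Q1 (X \<omega>)) \<gamma> \<partial>M) = \<gamma> * D_gamma M X A \<gamma> Q0 Q1"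
    using eventually_gt_at_top[of 0]
    by eventually_elim (simp add: D_gamma_def right_diff_distrib gamma_mult_H_gamma)
  with tendsto_diff[OF lim0 lim1] show ?thesis
    by (rule Lim_transform_eventually)
qed

end
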